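(* Let $G=(V,E)$ be a finite trivalent graph (for example, a honeycomb lattice with periodic boundary conditions), with a fixed orientation chosen on each edge, and let $L$ be a finite set of string labels with an involution $i\mapsto i^*$. The Hilbert space is $\bigotimes_{e\in E}\mathbb{C}^{L}$, with orthonormal basis $\{|s\rangle\}$ indexed by configurations $s:E\to L$. Let $\mathcal{B}\subseteq L^3$ be a set of allowed triples (branching rules), and call a configuration $s$ valid if at every vertex $v$ the triple of labels on the three edges incident to $v$ (each label replaced by its dual if the corresponding edge is oriented away from $v$) belongs to $\mathcal{B}$; let $S$ be the set of valid configurations. Assume the string-net is Abelian in the sense that the branching rules have no multiplicity: at every vertex, once the (appropriately dualized) labels on two of the three incident edges are fixed, there is at most one label on the third edge making the triple allowed. Let $|\Phi\rangle=\sum_{s\in S}a(s)|s\rangle$ be the string-net ground state (a normalized state supported only on valid configurations). Let $A\subseteq E$ be a non-empty set of edges that is non-loopy, i.e. the subgraph of $G$ formed by the edges of $A$ contains no cycle, and suppose $B=E\setminus A$ is its complement. Then the reduced density matrix $\rho_A=\mathrm{Tr}_B|\Phi\rangle\langle\Phi|$ is fully separable (with respect to the partition of $A$ into its individual edges), i.e. $\rho_A$ contains no entanglement whatsoever.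
   Context: Matrix elements of the reduced state are $[\rho_A]_{s_A,s_A'}=\sum_{s_B}a(s_A s_B)\,a^*(s_A' s_B)$, where the sum is over configurations $s_B$ of the edges in $B$ with both $(s_A,s_B)\in S$ and $(s_A',s_B)\in S$. A density matrix on $\bigotimes_{e\in A}\mathcal{H}_e$ is fully separable if it is a convex combination of product states $\bigotimes_{e\in A}|\psi_e\rangle\langle\psi_e|$. In the Levin–Wen string-net construction, the fixed-point ground state is determined by tensors $F^{ijm}_{kln}$ and $d_i$ and is supported exactly on configurations satisfying the branching rules at every vertex; only this support property is relevant here. *)

theory Defs
  imports Complex_Main "HOL-Library.FuncSet"
begin

text \<open>A half-edge is a pair (e, out):
(e, True) is the end of e at its tail (so e is oriented away from that vertex),
(e, False) the end at its head. inc v i, for i < 3, enumerates the three half-edges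
at the vertex v (in a fixed order, used to read off the triple of labels at v).\<close>

definition trivalent_graph ::
  "'v set \<Rightarrow> 'e set \<Rightarrow> ('e \<Rightarrow> 'v) \<Rightarrow> ('e \<Rightarrow> 'v) \<Rightarrow> ('v \<Rightarrow> nat \<Rightarrow> 'e \<times> bool) \<Rightarrow> bool" where
  "trivalent_graph V E tail head inc \<longleftrightarrow>
     finite V \<and> finite E \<and>
     (\<forall>e\<in>E. tail e \<in> V \<and> head e \<in> V) \<and>
     (\<forall>v\<in>V. \<forall>i<3. fst (inc v i) \<in> E \<and>
         (if snd (inc v i) then tail (fst (inc v i)) = v else head (fst (inc v i)) = v)) \<and>
     inj_on (\<lambda>(v, i). inc v i) (V \<times> {..<3}) \<and>
     (\<lambda>(v, i). inc v i) ` (V \<times> {..<3}) = E \<times> (UNIV :: bool set)"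

definition slot_label ::
  "('l \<Rightarrow> 'l) \<Rightarrow> ('v \<Rightarrow> nat \<Rightarrow> 'e \<times> bool) \<Rightarrow> ('e \<Rightarrow> 'l) \<Rightarrow> 'v \<Rightarrow> nat \<Rightarrow> 'l" where
  "slot_label dual inc s v i =
     (if snd (inc v i) then dual (s (fst (inc v i))) else s (fst (inc v i)))"

definition valid_configs ::
  "'v set \<Rightarrow> 'e set \<Rightarrow> 'l set \<Rightarrow> ('l \<Rightarrow> 'l) \<Rightarrow> ('v \<Rightarrow> nat \<Rightarrow> 'e \<times> bool)
    \<Rightarrow> ('l \<times> 'l \<times> 'l) set \<Rightarrow> ('e \<Rightarrow> 'l) set" where
  "valid_configs V E L dual inc Br =
     {s \<in> E \<rightarrow>\<^sub>E L. \<forall>v\<in>V.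
        (slot_label dual inc s v 0, slot_label dual inc s v 1, slot_label dual inc s v 2) \<in> Br}"

definition abelian_rules :: "('l \<times> 'l \<times> 'l) set \<Rightarrow> bool" where
  "abelian_rules Br \<longleftrightarrow>
     (\<forall>a b c c'. (a, b, c) \<in> Br \<longrightarrow> (a, b, c') \<in> Br \<longrightarrow> c = c') \<and>
     (\<forall>a b b' c. (a, b, c) \<in> Br \<longrightarrow> (a, b', c) \<in> Br \<longrightarrow> b = b') \<and>
     (\<forall>a a' b c. (a, b, c) \<in> Br \<longrightarrow> (a', b, c) \<in> Br \<longrightarrow> a = a')"

text \<open>The subgraph formed by the edges of A contains a cycle (length \<ge> 1; self-loops and
pairs of parallel edges count as cycles).\<close>
definition has_cycle :: "'e set \<Rightarrow> ('e \<Rightarrow> 'v) \<Rightarrow> ('e \<Rightarrow> 'v) \<Rightarrow> bool" where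
  "has_cycle A tail head \<longleftrightarrow>
     (\<exists>es vs. es \<noteq> [] \<and> length vs = length es \<and> distinct es \<and> distinct vs \<and> set es \<subseteq> A \<and>
        (\<forall>i<length es.
           (tail (es ! i) = vs ! i \<and> head (es ! i) = vs ! ((i + 1) mod length es)) \<or>
           (head (es ! i) = vs ! i \<and> tail (es ! i) = vs ! ((i + 1) mod length es))))"

definition merge_cfg :: "'e set \<Rightarrow> ('e \<Rightarrow> 'l) \<Rightarrow> ('e \<Rightarrow> 'l) \<Rightarrow> ('e \<Rightarrow> 'l)" where
  "merge_cfg A sA sB = (\<lambda>e. if e \<in> A then sA e else sB e)"

definition reduced_dm ::
  "'e set \<Rightarrow> 'e set \<Rightarrow> 'l set \<Rightarrow> (('e \<Rightarrow> 'l) \<Rightarrow> complex) \<Rightarrow> ('e \<Rightarrow> 'l) \<Rightarrow> ('e \<Rightarrow> 'l) \<Rightarrow> complex" where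
  "reduced_dm A B L a sA sA' =
     (\<Sum>sB \<in> B \<rightarrow>\<^sub>E L. a (merge_cfg A sA sB) * cnj (a (merge_cfg A sA' sB)))"

definition unit_vector :: "'l set \<Rightarrow> ('l \<Rightarrow> complex) \<Rightarrow> bool" where
  "unit_vector L \<phi> \<longleftrightarrow> (\<Sum>l\<in>L. (cmod (\<phi> l))\<^sup>2) = 1"

definition product_dm ::
  "'e set \<Rightarrow> ('e \<Rightarrow> 'l \<Rightarrow> complex) \<Rightarrow> ('e \<Rightarrow> 'l) \<Rightarrow> ('e \<Rightarrow> 'l) \<Rightarrow> complex" where
  "product_dm A \<psi> s s' = (\<Prod>e\<in>A. \<psi> e (s e) * cnj (\<psi> e (s' e)))"

definition fully_separable ::
  "'e set \<Rightarrow> 'l set \<Rightarrow> (('e \<Rightarrow> 'l) \<Rightarrow> ('e \<Rightarrow> 'l) \<Rightarrow> complex) \<Rightarrow> bool" where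
  "fully_separable A L \<rho> \<longleftrightarrow>
     (\<exists>(K::nat) (p::nat \<Rightarrow> real) (\<psi>::nat \<Rightarrow> 'e \<Rightarrow> 'l \<Rightarrow> complex).
        (\<forall>k<K. p k \<ge> 0 \<and> (\<forall>e\<in>A. unit_vector L (\<psi> k e))) \<and>
        (\<Sum>k<K. p k) = 1 \<and>
        (\<forall>s\<in>A \<rightarrow>\<^sub>E L. \<forall>s'\<in>A \<rightarrow>\<^sub>E L.
           \<rho> s s' = (\<Sum>k<K. complex_of_real (p k) * product_dm A (\<psi> k) s s')))"

end

theory Submission
  imports Defs
begin

(* If two valid configurations agree outside A, let D be the set of edges on which they differ.
   In an Abelian string-net the labels on two edges at a vertex determine the third, so every
   vertex incident to an edge of D is incident to a second edge of D. Starting from an edge of D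
   one can thus walk forever along D without ever going back along the edge just used, and in a
   finite graph such a walk closes a cycle in D \<subseteq> A. So for non-loopy A the labels on B
   determine those on A: rho_A is diagonal in the product basis, i.e. a mixture of product basis
   states with weights \<Sum>_{s_B} |a(s_A s_B)|^2. *)

lemma valid_configs_agree_at_third_slot:
  assumes dual_L: "\<forall>i\<in>L. dual i \<in> L \<and> dual (dual i) = i"
    and abelian: "abelian_rules Br"
    and s: "s \<in> valid_configs V E L dual inc Br" and s': "s' \<in> valid_configs V E L dual inc Br"
    and v: "v \<in> V" and i: "i < 3" and e: "fst (inc v i) \<in> E"
    and others: "\<forall>j<3. j \<noteq> i \<longrightarrow> s (fst (inc v j)) = s' (fst (inc v j))"
  shows "s (fst (inc v i)) = s' (fst (inc v i))"
proof -
  have "(slot_label dual inc s v 0, slot_label dual inc s v 1, slot_label dual inc s v 2) \<in> Br"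
    and "(slot_label dual inc s' v 0, slot_label dual inc s' v 1, slot_label dual inc s' v 2) \<in> Br"
    using s s' v unfolding valid_configs_def by auto
  moreover have "slot_label dual inc s v j = slot_label dual inc s' v j" if "j < 3" "j \<noteq> i" for j
    using others that unfolding slot_label_def by auto
  ultimately have slot_i: "slot_label dual inc s v i = slot_label dual inc s' v i"
    using i abelian unfolding abelian_rules_def by (auto simp: numeral_3_eq_3 numeral_2_eq_2 less_Suc_eq)
  have "inj_on dual L"
    using dual_L by (metis inj_onI)
  moreover have "s (fst (inc v i)) \<in> L" "s' (fst (inc v i)) \<in> L"
    using s s' e unfolding valid_configs_def by auto
  ultimately show ?thesis
    using slot_i unfolding slot_label_def by (auto split: if_splits dest: inj_onD)
qed

definition half_edge_vertex :: "('e \<Rightarrow> 'v) \<Rightarrow> ('e \<Rightarrow> 'v) \<Rightarrow> 'e \<times> bool \<Rightarrow> 'v" where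
  "half_edge_vertex tail head h = (if snd h then tail (fst h) else head (fst h))"

definition opposite_half_edge :: "'e \<times> bool \<Rightarrow> 'e \<times> bool" where
  "opposite_half_edge h = (fst h, \<not> snd h)"

lemma half_edge_vertex_opposite:
  "half_edge_vertex tail head (opposite_half_edge h) = (if snd h then head (fst h) else tail (fst h))"
  by (simp add: half_edge_vertex_def opposite_half_edge_def)


lemma trivalent_graph_half_edge_vertex:
  assumes "trivalent_graph V E tail head inc" and "e \<in> E"
  shows "half_edge_vertex tail head (e, b) \<in> V"
  using assms unfolding trivalent_graph_def half_edge_vertex_def by auto

lemma trivalent_graph_inc:
  assumes "trivalent_graph V E tail head inc" and "v \<in> V" and "i < 3"
  shows "fst (inc v i) \<in> E" and "half_edge_vertex tail head (inc v i) = v"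
  using assms unfolding trivalent_graph_def half_edge_vertex_def by (auto split: if_splits)

lemma trivalent_graph_inc_surj:
  assumes "trivalent_graph V E tail head inc" and "e \<in> E"
  obtains v i where "v \<in> V" and "i < 3" and "inc v i = (e, b)"
proof -
  have "(e, b) \<in> (\<lambda>(v, i). inc v i) ` (V \<times> {..<3})"
    using assms unfolding trivalent_graph_def by auto
  then show thesis
    using that by auto
qed

lemma trivalent_graph_inc_inj:
  assumes "trivalent_graph V E tail head inc" and "v \<in> V" and "i < 3" and "j < 3"
    and "inc v i = inc v j"
  shows "i = j"
  using assms inj_onD[of "\<lambda>(v, i). inc v i" "V \<times> {..<3}" "(v, i)" "(v, j)"]
  unfolding trivalent_graph_def by auto

text \<open>\<open>w n\<close> is the half-edge by which the walk leaves its \<open>n\<close>-th vertex.\<close>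

definition nonbacktracking_walk ::
  "'e set \<Rightarrow> ('e \<Rightarrow> 'v) \<Rightarrow> ('e \<Rightarrow> 'v) \<Rightarrow> (nat \<Rightarrow> 'e \<times> bool) \<Rightarrow> bool" where
  "nonbacktracking_walk A tail head w \<longleftrightarrow>
     (\<forall>n. fst (w n) \<in> A \<and>
        half_edge_vertex tail head (w (Suc n)) = half_edge_vertex tail head (opposite_half_edge (w n)) \<and>
        w (Suc n) \<noteq> opposite_half_edge (w n))"

lemma nonbacktracking_walk_edges_distinct:
  assumes walk: "nonbacktracking_walk A tail head w"
    and simple: "inj_on (\<lambda>n. half_edge_vertex tail head (w n)) {i..<j}"
    and kl: "i \<le> k" "k < l" "l < j"
  shows "fst (w k) \<noteq> fst (w l)"
proof
  define vs where "vs n = half_edge_vertex tail head (w n)" for n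
  assume same_edge: "fst (w k) = fst (w l)"
  show False
  proof (cases "snd (w k) = snd (w l)")
    case True
    then have "vs k = vs l"
      using same_edge unfolding vs_def half_edge_vertex_def by simp
    then show False
      using simple kl unfolding vs_def by (auto dest: inj_onD)
  next
    case False
    have "vs (Suc k) = half_edge_vertex tail head (opposite_half_edge (w k))"
      using walk unfolding vs_def nonbacktracking_walk_def by simp
    then have "vs l = vs (Suc k)"
      using same_edge False unfolding half_edge_vertex_opposite by (simp add: vs_def half_edge_vertex_def)
    then have "l = Suc k"
      using simple kl unfolding vs_def by (auto dest: inj_onD)
    moreover have "w l = opposite_half_edge (w k)"
      using same_edge False unfolding opposite_half_edge_def by (simp add: prod_eq_iff)
    ultimately show False
      using walk unfolding nonbacktracking_walk_def by auto
  qed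
qed

lemma nonbacktracking_walk_segment_has_cycle:
  assumes walk: "nonbacktracking_walk A tail head w"
    and "i < j"
    and closed: "half_edge_vertex tail head (w i) = half_edge_vertex tail head (w j)"
    and simple: "inj_on (\<lambda>n. half_edge_vertex tail head (w n)) {i..<j}"
  shows "has_cycle A tail head"
proof -
  define vs where "vs n = half_edge_vertex tail head (w n)" for n
  have vs_Suc: "vs (Suc n) = half_edge_vertex tail head (opposite_half_edge (w n))" for n
    using walk unfolding vs_def nonbacktracking_walk_def by simp
  define es where "es = map (\<lambda>k. fst (w k)) [i..<j]"
  define vl where "vl = map vs [i..<j]"
  have "distinct vl"
    using simple unfolding vl_def distinct_map vs_def[abs_def] by simp
  moreover have "distinct es"
    unfolding es_def distinct_map
    using nonbacktracking_walk_edges_distinct[OF walk simple]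
    by (auto intro!: inj_onI) (metis linorder_neqE_nat)
  moreover have "(tail (es ! p) = vl ! p \<and> head (es ! p) = vl ! ((p + 1) mod length es)) \<or>
      (head (es ! p) = vl ! p \<and> tail (es ! p) = vl ! ((p + 1) mod length es))"
    if "p < length es" for p
  proof -
    have "vl ! ((p + 1) mod length es) = vs (Suc (i + p))"
    proof (cases "p + 1 < j - i")
      case True
      then show ?thesis by (simp add: vl_def es_def)
    next
      case False
      then have "p + 1 = j - i"
        using that by (simp add: es_def)
      then have "Suc (i + p) = j" "(p + 1) mod length es = 0"
        by (auto simp: es_def)
      then show ?thesis
        using \<open>i < j\<close> closed by (simp add: vl_def vs_def)
    qed
    moreover have "es ! p = fst (w (i + p))" "vl ! p = vs (i + p)"
      using that by (simp_all add: es_def vl_def)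
    ultimately show ?thesis
      unfolding vs_Suc half_edge_vertex_opposite by (simp add: vs_def half_edge_vertex_def)
  qed
  moreover have "set es \<subseteq> A"
    using walk by (auto simp: es_def nonbacktracking_walk_def)
  ultimately show ?thesis
    unfolding has_cycle_def using \<open>i < j\<close>
    by (intro exI[of _ es] exI[of _ vl]) (simp add: es_def vl_def)
qed

lemma nonbacktracking_walk_has_cycle:
  assumes "finite V"
    and in_V: "\<And>n. half_edge_vertex tail head (w n) \<in> V"
    and walk: "nonbacktracking_walk A tail head w"
  shows "has_cycle A tail head"
proof -
  define vs where "vs n = half_edge_vertex tail head (w n)" for n
  have "\<not> inj vs"
    using \<open>finite V\<close> in_V finite_subset infinite_UNIV_nat
    by (metis finite_imageD image_subset_iff vs_def)
  then have "\<exists>j. \<exists>i<j. vs i = vs j"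
    unfolding inj_def by (metis linorder_neqE_nat)
  define j where "j = (LEAST j. \<exists>i<j. vs i = vs j)"
  obtain i where "i < j" "vs i = vs j"
    using LeastI_ex[OF \<open>\<exists>j. \<exists>i<j. vs i = vs j\<close>] unfolding j_def by blast
  have "vs k \<noteq> vs l" if "k < l" "l < j" for k l
    using that not_less_Least[of l "\<lambda>j. \<exists>i<j. vs i = vs j"] unfolding j_def by blast
  then have "inj_on vs {i..<j}"
    by (intro inj_onI) (metis atLeastLessThan_iff linorder_neqE_nat)
  then show ?thesis
    using nonbacktracking_walk_segment_has_cycle[OF walk \<open>i < j\<close>] \<open>vs i = vs j\<close>
    unfolding vs_def by blast
qed

lemma valid_configs_disagreement_continues:
  assumes graph: "trivalent_graph V E tail head inc"
    and dual_L: "\<forall>i\<in>L. dual i \<in> L \<and> dual (dual i) = i"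
    and abelian: "abelian_rules Br"
    and s: "s \<in> valid_configs V E L dual inc Br" and s': "s' \<in> valid_configs V E L dual inc Br"
    and h: "fst h \<in> E" "s (fst h) \<noteq> s' (fst h)"
  obtains h' where "fst h' \<in> E" and "s (fst h') \<noteq> s' (fst h')"
    and "half_edge_vertex tail head h' = half_edge_vertex tail head (opposite_half_edge h)"
    and "h' \<noteq> opposite_half_edge h"
proof -
  obtain v i where v: "v \<in> V" "i < 3" and vi: "inc v i = opposite_half_edge h"
    using trivalent_graph_inc_surj[OF graph h(1)] unfolding opposite_half_edge_def by metis
  then have "s (fst (inc v i)) \<noteq> s' (fst (inc v i))"
    using h by (simp add: opposite_half_edge_def)
  then obtain j where j: "j < 3" "j \<noteq> i" "s (fst (inc v j)) \<noteq> s' (fst (inc v j))"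
    using valid_configs_agree_at_third_slot[OF dual_L abelian s s' v trivalent_graph_inc(1)[OF graph v]]
    by blast
  show thesis
  proof (rule that[of "inc v j"])
    show "fst (inc v j) \<in> E"
      using trivalent_graph_inc(1)[OF graph v(1) j(1)] .
    show "half_edge_vertex tail head (inc v j) = half_edge_vertex tail head (opposite_half_edge h)"
      using trivalent_graph_inc(2)[OF graph v(1)] v(2) j(1) vi by metis
    show "inc v j \<noteq> opposite_half_edge h"
      using trivalent_graph_inc_inj[OF graph v(1) j(1) v(2)] j(2) vi by auto
  qed (use j in auto)
qed

lemma valid_configs_eq_if_agree_outside_acyclic:
  assumes graph: "trivalent_graph V E tail head inc"
    and dual_L: "\<forall>i\<in>L. dual i \<in> L \<and> dual (dual i) = i"
    and abelian: "abelian_rules Br"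
    and s: "s \<in> valid_configs V E L dual inc Br" and s': "s' \<in> valid_configs V E L dual inc Br"
    and agree: "\<forall>e\<in>E - A. s e = s' e"
    and acyclic: "\<not> has_cycle A tail head"
  shows "s = s'"
proof (rule ccontr)
  assume "s \<noteq> s'"
  moreover have "s \<in> E \<rightarrow>\<^sub>E L" "s' \<in> E \<rightarrow>\<^sub>E L"
    using s s' unfolding valid_configs_def by auto
  ultimately obtain e0 where "e0 \<in> E" "s e0 \<noteq> s' e0"
    by (metis PiE_ext)
  define disagrees where "disagrees h \<longleftrightarrow> fst h \<in> E \<and> s (fst h) \<noteq> s' (fst h)" for h :: "_ \<times> bool"
  have "\<exists>w. \<forall>n. disagrees (w n) \<and>
      half_edge_vertex tail head (w (Suc n)) = half_edge_vertex tail head (opposite_half_edge (w n)) \<and>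
      w (Suc n) \<noteq> opposite_half_edge (w n)"
  proof (rule dependent_nat_choice)
    show "\<exists>h. disagrees h"
      using \<open>e0 \<in> E\<close> \<open>s e0 \<noteq> s' e0\<close> unfolding disagrees_def by auto
  next
    fix h assume "disagrees h"
    then show "\<exists>h'. disagrees h' \<and>
        half_edge_vertex tail head h' = half_edge_vertex tail head (opposite_half_edge h) \<and>
        h' \<noteq> opposite_half_edge h"
      using valid_configs_disagreement_continues[OF graph dual_L abelian s s']
      unfolding disagrees_def by metis
  qed
  then obtain w where w: "\<forall>n. disagrees (w n) \<and>
      half_edge_vertex tail head (w (Suc n)) = half_edge_vertex tail head (opposite_half_edge (w n)) \<and>
      w (Suc n) \<noteq> opposite_half_edge (w n)"
    by blast
  have "nonbacktracking_walk A tail head w"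
    using w agree unfolding nonbacktracking_walk_def disagrees_def by blast
  moreover have "half_edge_vertex tail head (w n) \<in> V" for n
    using w trivalent_graph_half_edge_vertex[OF graph, of "fst (w n)" "snd (w n)"]
    unfolding disagrees_def by simp
  moreover have "finite V"
    using graph unfolding trivalent_graph_def by simp
  ultimately show False
    using nonbacktracking_walk_has_cycle acyclic by blast
qed

lemma merge_cfg_bij_betw:
  assumes "A \<subseteq> E"
  shows "bij_betw (\<lambda>(t, u). merge_cfg A t u) ((A \<rightarrow>\<^sub>E L) \<times> ((E - A) \<rightarrow>\<^sub>E L)) (E \<rightarrow>\<^sub>E L)"
proof (rule bij_betw_byWitness[where f' = "\<lambda>s. (restrict s A, restrict s (E - A))"])
  show "\<forall>x\<in>(A \<rightarrow>\<^sub>E L) \<times> ((E - A) \<rightarrow>\<^sub>E L).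
      (\<lambda>s. (restrict s A, restrict s (E - A))) ((\<lambda>(t, u). merge_cfg A t u) x) = x"
    by (auto simp: merge_cfg_def fun_eq_iff PiE_def extensional_def)
  show "\<forall>s\<in>E \<rightarrow>\<^sub>E L. (\<lambda>(t, u). merge_cfg A t u) (restrict s A, restrict s (E - A)) = s"
    using assms by (auto simp: merge_cfg_def fun_eq_iff PiE_def extensional_def)
  show "(\<lambda>(t, u). merge_cfg A t u) ` ((A \<rightarrow>\<^sub>E L) \<times> ((E - A) \<rightarrow>\<^sub>E L)) \<subseteq> E \<rightarrow>\<^sub>E L"
    using assms by (auto simp: merge_cfg_def PiE_def extensional_def)
  show "(\<lambda>s. (restrict s A, restrict s (E - A))) ` (E \<rightarrow>\<^sub>E L) \<subseteq> (A \<rightarrow>\<^sub>E L) \<times> ((E - A) \<rightarrow>\<^sub>E L)"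
    using assms by auto
qed

lemma sum_PiE_merge_cfg:
  assumes "A \<subseteq> E"
  shows "(\<Sum>t\<in>A \<rightarrow>\<^sub>E L. \<Sum>u\<in>(E - A) \<rightarrow>\<^sub>E L. f (merge_cfg A t u)) = (\<Sum>s\<in>E \<rightarrow>\<^sub>E L. f s)"
  using sum.reindex_bij_betw[OF merge_cfg_bij_betw[OF assms, of L], of f]
  by (simp add: sum.cartesian_product case_prod_beta)

lemma reduced_dm_diag:
  "reduced_dm A B L a t t = of_real (\<Sum>u\<in>B \<rightarrow>\<^sub>E L. (cmod (a (merge_cfg A t u)))\<^sup>2)"
  unfolding reduced_dm_def of_real_sum complex_norm_square by simp

lemma reduced_dm_eq_0_if_determined_by_complement:
  assumes support: "\<forall>s. s \<notin> S \<longrightarrow> a s = 0"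
    and determined: "\<And>s s'. s \<in> S \<Longrightarrow> s' \<in> S \<Longrightarrow> \<forall>e\<in>E - A. s e = s' e \<Longrightarrow> s = s'"
    and t: "t \<in> A \<rightarrow>\<^sub>E L" and t': "t' \<in> A \<rightarrow>\<^sub>E L" and "t \<noteq> t'"
  shows "reduced_dm A (E - A) L a t t' = 0"
  unfolding reduced_dm_def
proof (rule sum.neutral, rule ballI)
  fix u
  obtain e where "e \<in> A" "t e \<noteq> t' e"
    using t t' \<open>t \<noteq> t'\<close> PiE_ext by blast
  then have "merge_cfg A t u \<noteq> merge_cfg A t' u"
    unfolding merge_cfg_def by (auto simp: fun_eq_iff)
  moreover have "\<forall>e\<in>E - A. merge_cfg A t u e = merge_cfg A t' u e"
    by (simp add: merge_cfg_def)
  ultimately have "merge_cfg A t u \<notin> S \<or> merge_cfg A t' u \<notin> S"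
    using determined by blast
  then show "a (merge_cfg A t u) * cnj (a (merge_cfg A t' u)) = 0"
    using support by auto
qed

lemma product_dm_basis:
  assumes "finite A" and "s \<in> A \<rightarrow>\<^sub>E L" and "s' \<in> A \<rightarrow>\<^sub>E L" and "t \<in> A \<rightarrow>\<^sub>E L"
  shows "product_dm A (\<lambda>e l. of_bool (l = t e)) s s' = of_bool (s = t \<and> s' = t)"
proof (cases "s = t \<and> s' = t")
  case False
  then obtain e where "e \<in> A" "s e \<noteq> t e \<or> s' e \<noteq> t e"
    using assms PiE_ext by blast
  then have "product_dm A (\<lambda>e l. of_bool (l = t e)) s s' = 0"
    unfolding product_dm_def by (intro prod_zero \<open>finite A\<close> bexI[of _ e]) auto
  then show ?thesis
    using False by simp
qed (simp add: product_dm_def)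

lemma fully_separable_diagonal:
  fixes P :: "('e \<Rightarrow> 'l) \<Rightarrow> real"
  assumes "finite A" and "finite L"
    and diag: "\<And>t. t \<in> A \<rightarrow>\<^sub>E L \<Longrightarrow> \<rho> t t = of_real (P t)"
    and off_diag: "\<And>t t'. t \<in> A \<rightarrow>\<^sub>E L \<Longrightarrow> t' \<in> A \<rightarrow>\<^sub>E L \<Longrightarrow> t \<noteq> t' \<Longrightarrow> \<rho> t t' = 0"
    and nonneg: "\<And>t. t \<in> A \<rightarrow>\<^sub>E L \<Longrightarrow> P t \<ge> 0"
    and total: "(\<Sum>t\<in>A \<rightarrow>\<^sub>E L. P t) = 1"
  shows "fully_separable A L \<rho>"
proof -
  have "finite (A \<rightarrow>\<^sub>E L)"
    using \<open>finite A\<close> \<open>finite L\<close> by (rule finite_PiE)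
  define K where "K = card (A \<rightarrow>\<^sub>E L)"
  obtain h where h: "bij_betw h {..<K} (A \<rightarrow>\<^sub>E L)"
    using ex_bij_betw_nat_finite[OF \<open>finite (A \<rightarrow>\<^sub>E L)\<close>]
    unfolding K_def atLeast0LessThan by blast
  have h_PiE: "h k \<in> A \<rightarrow>\<^sub>E L" if "k < K" for k
    using h that bij_betw_apply by fastforce
  define \<psi> where "\<psi> k e l = (of_bool (l = h k e) :: complex)" for k e l
  have "unit_vector L (\<psi> k e)" if "k < K" "e \<in> A" for k e
  proof -
    have "(cmod (\<psi> k e l))\<^sup>2 = of_bool (l = h k e)" for l
      by (simp add: \<psi>_def)
    moreover have "L \<inter> {l. l = h k e} = {h k e}"
      using h_PiE[OF that(1)] that(2) by auto
    ultimately show ?thesis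
      using \<open>finite L\<close> by (simp add: unit_vector_def)
  qed
  moreover have "\<rho> s s' = (\<Sum>k<K. of_real (P (h k)) * product_dm A (\<psi> k) s s')"
    if s: "s \<in> A \<rightarrow>\<^sub>E L" and s': "s' \<in> A \<rightarrow>\<^sub>E L" for s s'
  proof -
    have "(\<Sum>k<K. of_real (P (h k)) * product_dm A (\<psi> k) s s')
        = (\<Sum>k<K. of_real (P (h k)) * of_bool (s = h k \<and> s' = h k))"
      using product_dm_basis[OF \<open>finite A\<close> s s' h_PiE] unfolding \<psi>_def by simp
    also have "\<dots> = (\<Sum>t\<in>A \<rightarrow>\<^sub>E L. of_real (P t) * of_bool (s = t \<and> s' = t))"
      using sum.reindex_bij_betw[OF h, of "\<lambda>t. of_real (P t) * of_bool (s = t \<and> s' = t)"] by simp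
    also have "\<dots> = (\<Sum>t \<in> (A \<rightarrow>\<^sub>E L) \<inter> {t. s = t \<and> s' = t}. of_real (P t))"
      using \<open>finite (A \<rightarrow>\<^sub>E L)\<close> by (rule sum_mult_of_bool_eq)
    also have "\<dots> = \<rho> s s'"
    proof (cases "s = s'")
      case True
      then have "(A \<rightarrow>\<^sub>E L) \<inter> {t. s = t \<and> s' = t} = {s}"
        using s by auto
      then show ?thesis
        using True diag[OF s] by simp
    next
      case False
      then have "(A \<rightarrow>\<^sub>E L) \<inter> {t. s = t \<and> s' = t} = {}"
        by auto
      then show ?thesis
        using off_diag[OF s s' False] by simp
    qed
    finally show ?thesis ..
  qed
  ultimately show ?thesis
    unfolding fully_separable_def
    using nonneg h_PiE total sum.reindex_bij_betw[OF h, of P]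
    by (intro exI[of _ K] exI[of _ "\<lambda>k. P (h k)"] exI[of _ \<psi>]) auto
qed

theorem mainTheorem1:
  fixes V :: "'v set" and E :: "'e set" and tail head :: "'e \<Rightarrow> 'v"
    and inc :: "'v \<Rightarrow> nat \<Rightarrow> 'e \<times> bool"
    and L :: "'l set" and dual :: "'l \<Rightarrow> 'l" and Br :: "('l \<times> 'l \<times> 'l) set"
    and a :: "('e \<Rightarrow> 'l) \<Rightarrow> complex" and A :: "'e set"
  assumes graph: "trivalent_graph V E tail head inc"
    and finL: "finite L"
    and dual_L: "\<forall>i\<in>L. dual i \<in> L \<and> dual (dual i) = i"
    and Br_L: "Br \<subseteq> L \<times> L \<times> L"
    and abelian: "abelian_rules Br"
    and support: "\<forall>s. s \<notin> valid_configs V E L dual inc Br \<longrightarrow> a s = 0"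
    and normalized: "(\<Sum>s\<in>valid_configs V E L dual inc Br. (cmod (a s))\<^sup>2) = 1"
    and A_sub: "A \<subseteq> E" and A_ne: "A \<noteq> {}"
    and nonloopy: "\<not> has_cycle A tail head"
  shows "fully_separable A L (reduced_dm A (E - A) L a)"
proof -
  define S where "S = valid_configs V E L dual inc Br"
  have "finite E"
    using graph unfolding trivalent_graph_def by simp
  then have "finite A"
    using A_sub finite_subset by blast
  have off_diag: "reduced_dm A (E - A) L a t t' = 0"
    if "t \<in> A \<rightarrow>\<^sub>E L" "t' \<in> A \<rightarrow>\<^sub>E L" "t \<noteq> t'" for t t'
    using reduced_dm_eq_0_if_determined_by_complement[OF support _ that]
      valid_configs_eq_if_agree_outside_acyclic[OF graph dual_L abelian _ _ _ nonloopy]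
    by blast
  have "(\<Sum>t\<in>A \<rightarrow>\<^sub>E L. \<Sum>u\<in>(E - A) \<rightarrow>\<^sub>E L. (cmod (a (merge_cfg A t u)))\<^sup>2)
      = (\<Sum>s\<in>E \<rightarrow>\<^sub>E L. (cmod (a s))\<^sup>2)"
    using A_sub by (rule sum_PiE_merge_cfg)
  also have "\<dots> = (\<Sum>s\<in>S. (cmod (a s))\<^sup>2)"
    using support \<open>finite E\<close> finL
    by (intro sum.mono_neutral_right) (auto simp: S_def valid_configs_def finite_PiE)
  finally have total: "(\<Sum>t\<in>A \<rightarrow>\<^sub>E L. \<Sum>u\<in>(E - A) \<rightarrow>\<^sub>E L. (cmod (a (merge_cfg A t u)))\<^sup>2) = 1"
    using normalized unfolding S_def by simp
  show ?thesis
    using \<open>finite A\<close> finL reduced_dm_diag off_diag total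
    by (intro fully_separable_diagonal) (auto intro: sum_nonneg)
qed

end
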